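(* Let $0<\alpha<1$ and $\epsilon\ge 0$. For $i\in[l]$ let $\rho_i$ be a quantum state on a finite-dimensional Hilbert space $\mathcal H$ and $\Pi_i$ an orthogonal projector on $\mathcal H$ with $\operatorname{Tr}[\Pi_i\rho_i]\ge 1-\epsilon$. Let $\tilde{\mathcal H}=\mathcal H\oplus\mathcal H_1\oplus\cdots\oplus\mathcal H_l$ be as in the context, and view operators on $\mathcal H$ as operators on $\tilde{\mathcal H}$ via the identity embedding. Then there is an orthogonal projector $\hat\Pi$ on $\tilde{\mathcal H}$ such that $\operatorname{Tr}[\hat\Pi\rho_i]\ge 1-\epsilon-\alpha$ for all $i\in[l]$, and for every state $\sigma$ on $\mathcal H$, $$\operatorname{Tr}[\hat\Pi\sigma]\ \le\ \frac{1-\alpha}{\alpha}\sum_{i\in[l]}\operatorname{Tr}[\Pi_i\sigma].$$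
   Context: $\mathcal{H}_1,\ldots,\mathcal{H}_l$ are Hilbert spaces each of dimension $\dim\mathcal{H}$ and $\tilde{\mathcal{H}}:=\mathcal{H}\oplus\mathcal{H}_1\oplus\cdots\oplus\mathcal{H}_l$ is the orthogonal direct sum. *)

theory Defs
  imports "Jordan_Normal_Form.Schur_Decomposition"
begin

(* Operators on a d-dimensional complex Hilbert space are d x d complex matrices. *)

definition mtrace :: "complex mat \<Rightarrow> complex" where
  "mtrace A = (\<Sum>i<dim_row A. A $$ (i, i))"

(* positive semidefinite: <v, A v> >= 0 (complex order: real and nonnegative) *)
definition psd_mat :: "nat \<Rightarrow> complex mat \<Rightarrow> bool" where
  "psd_mat n A \<longleftrightarrow> A \<in> carrier_mat n n \<and>
     (\<forall>v \<in> carrier_vec n. 0 \<le> (A *\<^sub>v v) \<bullet>c v)"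

definition is_state :: "nat \<Rightarrow> complex mat \<Rightarrow> bool" where
  "is_state n \<rho> \<longleftrightarrow> psd_mat n \<rho> \<and> mtrace \<rho> = 1"

definition is_projector :: "nat \<Rightarrow> complex mat \<Rightarrow> bool" where
  "is_projector n P \<longleftrightarrow> P \<in> carrier_mat n n \<and> P * P = P \<and> mat_adjoint P = P"

(* H~ = H (+) H_1 (+) ... (+) H_l with dim H_i = dim H = d has dimension d + l*d;
   an operator on H is extended by zero to H~ via the identity embedding of H
   as the first summand. *)
definition embed_op :: "nat \<Rightarrow> nat \<Rightarrow> complex mat \<Rightarrow> complex mat" where
  "embed_op d l A = four_block_mat A (0\<^sub>m d (l * d)) (0\<^sub>m (l * d) d) (0\<^sub>m (l * d) (l * d))"

end

theory Submission
  imports Defs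
begin

(* Put s = sqrt (1 - \<alpha>), t = sqrt \<alpha> and let the projector be the orthogonal projector onto the
  span of the vectors s \<Pi>\<^sub>i e\<^sub>b \<oplus> t \<Pi>\<^sub>i e\<^sub>b (second component in the i-th copy), i.e. onto the
  column space of the matrix R having these columns.
  Lower bound: X = R G\<^sub>i, where G\<^sub>i places \<Pi>\<^sub>i in block i, is a partial isometry with X\<^sup>* X = \<Pi>\<^sub>i,
  range inside that of the projector and H-component s \<Pi>\<^sub>i. Hence the projector dominates X X\<^sup>*, and
  Tr[X X\<^sup>* \<rho>\<^sub>i] = s\<^sup>2 Tr[\<Pi>\<^sub>i \<rho>\<^sub>i] \<ge> (1 - \<alpha>)(1 - \<epsilon>) \<ge> 1 - \<epsilon> - \<alpha>.
  Upper bound: write the projector applied to the embedding E of H as R W. The compression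
  T = E\<^sup>* (projector) E then satisfies T = s V\<^sup>* W = s W\<^sup>* V and T = T\<^sup>* T + t\<^sup>2 W\<^sup>* W, where V stacks
  the \<Pi>\<^sub>i. This gives the Gram identity s\<^sup>2 \<Sigma>\<^sub>i \<Pi>\<^sub>i = Y\<^sup>* Y + t\<^sup>2 (T + T\<^sup>* T) with Y = s V - t\<^sup>2 W, so
  t\<^sup>2 Tr[T \<sigma>] \<le> s\<^sup>2 \<Sigma>\<^sub>i Tr[\<Pi>\<^sub>i \<sigma>] for every state \<sigma>. *)

section \<open>Adjoints and traces\<close>

lemma mat_adjoint_carrier [simp]: "A \<in> carrier_mat n m \<Longrightarrow> mat_adjoint A \<in> carrier_mat m n"
  unfolding mat_adjoint_def by auto

lemma dim_mat_adjoint [simp]: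
  "dim_row (mat_adjoint A) = dim_col A" "dim_col (mat_adjoint A) = dim_row A"
  unfolding mat_adjoint_def by auto

lemma index_mat_adjoint [simp]:
  "i < dim_col A \<Longrightarrow> j < dim_row A \<Longrightarrow> mat_adjoint A $$ (i, j) = cnj (A $$ (j, i))"
  unfolding mat_adjoint_def by (simp add: mat_of_rows_index)

lemma mat_adjoint_adjoint [simp]: "mat_adjoint (mat_adjoint (A :: complex mat)) = A"
  by (rule eq_matI) auto

lemma mat_adjoint_mult:
  assumes "A \<in> carrier_mat n k" "B \<in> carrier_mat k m"
  shows "mat_adjoint ((A :: complex mat) * B) = mat_adjoint B * mat_adjoint A"
  using assms by (intro eq_matI) (auto simp: scalar_prod_def sum_conjugate intro!: sum.cong)

lemma mat_adjoint_add:
  assumes "A \<in> carrier_mat n m" "B \<in> carrier_mat n m"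
  shows "mat_adjoint ((A :: complex mat) + B) = mat_adjoint A + mat_adjoint B"
  using assms by (intro eq_matI) auto

lemma mat_adjoint_minus:
  assumes "A \<in> carrier_mat n m" "B \<in> carrier_mat n m"
  shows "mat_adjoint ((A :: complex mat) - B) = mat_adjoint A - mat_adjoint B"
  using assms by (intro eq_matI) auto

lemma mat_adjoint_smult: "mat_adjoint (a \<cdot>\<^sub>m (A :: complex mat)) = cnj a \<cdot>\<^sub>m mat_adjoint A"
  by (intro eq_matI) auto

lemma mat_adjoint_real_smult [simp]:
  "mat_adjoint (complex_of_real a \<cdot>\<^sub>m (A :: complex mat)) = complex_of_real a \<cdot>\<^sub>m mat_adjoint A"
  by (simp add: mat_adjoint_smult)

lemma mat_adjoint_zero [simp]: "mat_adjoint (0\<^sub>m n m :: complex mat) = 0\<^sub>m m n"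
  by (intro eq_matI) auto

lemma cscalar_prod_mat_adjoint:
  fixes A :: "complex mat"
  assumes "A \<in> carrier_mat n m" "x \<in> carrier_vec m" "y \<in> carrier_vec n"
  shows "(A *\<^sub>v x) \<bullet>c y = x \<bullet>c (mat_adjoint A *\<^sub>v y)"
proof -
  have "(A *\<^sub>v x) \<bullet>c y = (\<Sum>i<n. \<Sum>j<m. A $$ (i, j) * x $ j * cnj (y $ i))"
    using assms by (auto simp: scalar_prod_def atLeast0LessThan sum_distrib_right intro!: sum.cong)
  also have "\<dots> = (\<Sum>j<m. \<Sum>i<n. A $$ (i, j) * x $ j * cnj (y $ i))"
    by (rule sum.swap)
  also have "\<dots> = x \<bullet>c (mat_adjoint A *\<^sub>v y)"
    using assms
    by (auto simp: scalar_prod_def atLeast0LessThan sum_distrib_left sum_conjugate intro!: sum.cong)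
  finally show ?thesis .
qed

lemma cscalar_prod_self_real: "u \<in> carrier_vec n \<Longrightarrow> cnj (u \<bullet>c (u :: complex vec)) = u \<bullet>c u"
  using conjugate_square_ge_0_vec[of u] by (simp add: less_eq_complex_def complex_eq_iff)

lemma index_mult_mat_sum:
  "A \<in> carrier_mat n k \<Longrightarrow> B \<in> carrier_mat k m \<Longrightarrow> i < n \<Longrightarrow> j < m \<Longrightarrow>
   (A * B) $$ (i, j) = (\<Sum>a<k. A $$ (i, a) * B $$ (a, j))"
  by (auto simp: scalar_prod_def atLeast0LessThan intro!: sum.cong)

lemma smult_mult_smult_mat:
  "A \<in> carrier_mat n k \<Longrightarrow> B \<in> carrier_mat k m \<Longrightarrow>
   (a \<cdot>\<^sub>m A) * (b \<cdot>\<^sub>m (B :: complex mat)) = (a * b) \<cdot>\<^sub>m (A * B)"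
  by (intro eq_matI) (auto simp: scalar_prod_def sum_distrib_left ac_simps)

lemma smult_mat_vec:
  "A \<in> carrier_mat n m \<Longrightarrow> v \<in> carrier_vec m \<Longrightarrow> (k \<cdot>\<^sub>m (A :: complex mat)) *\<^sub>v v = k \<cdot>\<^sub>v (A *\<^sub>v v)"
  by (intro eq_vecI) (auto simp: scalar_prod_def sum_distrib_left ac_simps)

lemma gram_minus:
  assumes "A \<in> carrier_mat n k" "B \<in> carrier_mat n k"
  shows "mat_adjoint ((A :: complex mat) - B) * (A - B)
    = mat_adjoint A * A - mat_adjoint A * B - mat_adjoint B * A + mat_adjoint B * B"
  using assms
  by (intro eq_matI) (auto simp: scalar_prod_def sum_subtractf sum.distrib algebra_simps)

lemma gram_split:
  assumes E: "E \<in> carrier_mat n a" and F: "F \<in> carrier_mat n b"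
    and R: "(R :: complex mat) \<in> carrier_mat n k"
    and EF: "E * mat_adjoint E + F * mat_adjoint F = 1\<^sub>m n"
  shows "mat_adjoint R * R = mat_adjoint (mat_adjoint E * R) * (mat_adjoint E * R)
    + mat_adjoint (mat_adjoint F * R) * (mat_adjoint F * R)"
proof -
  have aE: "mat_adjoint E \<in> carrier_mat a n" and aF: "mat_adjoint F \<in> carrier_mat b n"
    and aR: "mat_adjoint R \<in> carrier_mat k n" using E F R by auto
  have ER: "mat_adjoint E * R \<in> carrier_mat a k" and FR: "mat_adjoint F * R \<in> carrier_mat b k"
    using mult_carrier_mat[OF aE R] mult_carrier_mat[OF aF R] .
  have "mat_adjoint R * R = mat_adjoint R * ((E * mat_adjoint E + F * mat_adjoint F) * R)"
    unfolding EF using R by simp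
  also have "\<dots> = mat_adjoint R * E * (mat_adjoint E * R) + mat_adjoint R * F * (mat_adjoint F * R)"
    using add_mult_distrib_mat[OF mult_carrier_mat[OF E aE] mult_carrier_mat[OF F aF] R]
      mult_add_distrib_mat[OF aR mult_carrier_mat[OF E ER] mult_carrier_mat[OF F FR]]
      assoc_mult_mat[OF E aE R] assoc_mult_mat[OF F aF R]
      assoc_mult_mat[OF aR E ER] assoc_mult_mat[OF aR F FR] by simp
  also have "mat_adjoint R * E = mat_adjoint (mat_adjoint E * R)"
    by (simp add: mat_adjoint_mult[OF aE R])
  also have "mat_adjoint R * F = mat_adjoint (mat_adjoint F * R)"
    by (simp add: mat_adjoint_mult[OF aF R])
  finally show ?thesis .
qed

lemma eq_by_complete_pair:
  assumes E: "E \<in> carrier_mat n a" and F: "F \<in> carrier_mat n b"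
    and A: "(A :: complex mat) \<in> carrier_mat n k" and B: "B \<in> carrier_mat n k"
    and EF: "E * mat_adjoint E + F * mat_adjoint F = 1\<^sub>m n"
    and EA: "mat_adjoint E * A = mat_adjoint E * B" and FA: "mat_adjoint F * A = mat_adjoint F * B"
  shows "A = B"
proof -
  have aE: "mat_adjoint E \<in> carrier_mat a n" and aF: "mat_adjoint F \<in> carrier_mat b n"
    using E F by auto
  have expand: "C = E * (mat_adjoint E * C) + F * (mat_adjoint F * C)"
    if C: "C \<in> carrier_mat n k" for C
  proof -
    have "C = (E * mat_adjoint E + F * mat_adjoint F) * C" unfolding EF using C by simp
    also have "\<dots> = E * (mat_adjoint E * C) + F * (mat_adjoint F * C)"
      using add_mult_distrib_mat[OF mult_carrier_mat[OF E aE] mult_carrier_mat[OF F aF] C]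
        assoc_mult_mat[OF E aE C] assoc_mult_mat[OF F aF C] by simp
    finally show ?thesis .
  qed
  show ?thesis using expand[OF A] expand[OF B] unfolding EA FA by simp
qed

lemma mtrace_mult_comm:
  assumes "A \<in> carrier_mat n m" "B \<in> carrier_mat m n"
  shows "mtrace ((A :: complex mat) * B) = mtrace (B * A)"
proof -
  have "mtrace (A * B) = (\<Sum>i<n. \<Sum>j<m. A $$ (i, j) * B $$ (j, i))"
    using assms unfolding mtrace_def by (auto simp: scalar_prod_def atLeast0LessThan intro!: sum.cong)
  also have "\<dots> = (\<Sum>j<m. \<Sum>i<n. B $$ (j, i) * A $$ (i, j))"
    by (subst sum.swap) (simp add: mult.commute)
  also have "\<dots> = mtrace (B * A)"
    using assms unfolding mtrace_def by (auto simp: scalar_prod_def atLeast0LessThan intro!: sum.cong)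
  finally show ?thesis .
qed

lemma mtrace_add:
  "A \<in> carrier_mat n n \<Longrightarrow> B \<in> carrier_mat n n \<Longrightarrow> mtrace ((A :: complex mat) + B) = mtrace A + mtrace B"
  unfolding mtrace_def by (auto simp: sum.distrib)

lemma mtrace_minus:
  "A \<in> carrier_mat n n \<Longrightarrow> B \<in> carrier_mat n n \<Longrightarrow> mtrace ((A :: complex mat) - B) = mtrace A - mtrace B"
  unfolding mtrace_def by (auto simp: sum_subtractf)

lemma mtrace_smult: "A \<in> carrier_mat n n \<Longrightarrow> mtrace (a \<cdot>\<^sub>m (A :: complex mat)) = a * mtrace A"
  unfolding mtrace_def by (auto simp: sum_distrib_left)

lemma mtrace_add_mult:
  assumes A: "A \<in> carrier_mat n n" and B: "B \<in> carrier_mat n n" and C: "C \<in> carrier_mat n n"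
  shows "mtrace ((A + B) * (C :: complex mat)) = mtrace (A * C) + mtrace (B * C)"
  using add_mult_distrib_mat[OF A B C]
    mtrace_add[OF mult_carrier_mat[OF A C] mult_carrier_mat[OF B C]]
  by simp

lemma mtrace_smult_mult:
  assumes A: "A \<in> carrier_mat n n" and C: "C \<in> carrier_mat n n"
  shows "mtrace ((a \<cdot>\<^sub>m A) * (C :: complex mat)) = a * mtrace (A * C)"
  using mult_smult_assoc_mat[OF A C] mtrace_smult[OF mult_carrier_mat[OF A C]] by simp

lemma mtrace_gram_mult_nonneg:
  assumes psd: "psd_mat d \<sigma>" and Y: "Y \<in> carrier_mat k d"
  shows "0 \<le> mtrace (mat_adjoint Y * Y * \<sigma>)"
proof -
  have \<sigma>: "\<sigma> \<in> carrier_mat d d" using psd unfolding psd_mat_def by auto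
  have "mtrace (mat_adjoint Y * Y * \<sigma>) = mtrace (mat_adjoint Y * (Y * \<sigma>))"
    using assoc_mult_mat[OF mat_adjoint_carrier[OF Y] Y \<sigma>] by simp
  also have "\<dots> = mtrace (Y * \<sigma> * mat_adjoint Y)"
    using Y \<sigma> by (intro mtrace_mult_comm) auto
  also have "\<dots> = (\<Sum>i<k. (\<sigma> *\<^sub>v conjugate (row Y i)) \<bullet>c conjugate (row Y i))"
    unfolding mtrace_def
  proof (intro sum.cong)
    fix i assume i: "i \<in> {..<k}"
    have "(Y * \<sigma> * mat_adjoint Y) $$ (i, i)
        = (\<Sum>b<d. (\<Sum>a<d. Y $$ (i, a) * \<sigma> $$ (a, b)) * cnj (Y $$ (i, b)))"
      using i Y \<sigma> by (auto simp: scalar_prod_def atLeast0LessThan intro!: sum.cong)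
    also have "\<dots> = (\<Sum>a<d. \<Sum>b<d. Y $$ (i, a) * \<sigma> $$ (a, b) * cnj (Y $$ (i, b)))"
      unfolding sum_distrib_right by (rule sum.swap)
    also have "\<dots> = (\<sigma> *\<^sub>v conjugate (row Y i)) \<bullet>c conjugate (row Y i)"
      using i Y \<sigma> by (auto simp: scalar_prod_def atLeast0LessThan sum_distrib_left sum_distrib_right
          intro!: sum.cong)
    finally show "(Y * \<sigma> * mat_adjoint Y) $$ (i, i)
      = (\<sigma> *\<^sub>v conjugate (row Y i)) \<bullet>c conjugate (row Y i)" .
  qed (use Y \<sigma> in auto)
  also have "\<dots> \<ge> 0"
  proof (intro sum_nonneg)
    fix i assume "i \<in> {..<k}"
    then have "conjugate (row Y i) \<in> carrier_vec d" using Y by auto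
    then show "0 \<le> (\<sigma> *\<^sub>v conjugate (row Y i)) \<bullet>c conjugate (row Y i)"
      using psd unfolding psd_mat_def by blast
  qed
  finally show ?thesis .
qed

lemma psd_mat_congruence:
  assumes \<rho>: "psd_mat d \<rho>" and E: "E \<in> carrier_mat n d"
  shows "psd_mat n (E * \<rho> * mat_adjoint E)"
  unfolding psd_mat_def
proof (intro conjI ballI)
  have \<rho>c: "\<rho> \<in> carrier_mat d d" using \<rho> unfolding psd_mat_def by auto
  then show "E * \<rho> * mat_adjoint E \<in> carrier_mat n n"
    using mult_carrier_mat[OF mult_carrier_mat[OF E] mat_adjoint_carrier[OF E]] by blast
  fix v :: "complex vec" assume v: "v \<in> carrier_vec n"
  have w: "mat_adjoint E *\<^sub>v v \<in> carrier_vec d"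
    using mult_mat_vec_carrier[OF mat_adjoint_carrier[OF E] v] .
  have "(E * \<rho> * mat_adjoint E *\<^sub>v v) \<bullet>c v = (E *\<^sub>v (\<rho> *\<^sub>v (mat_adjoint E *\<^sub>v v))) \<bullet>c v"
    using assoc_mult_mat_vec[OF mult_carrier_mat[OF E \<rho>c] mat_adjoint_carrier[OF E] v]
      assoc_mult_mat_vec[OF E \<rho>c w] by simp
  also have "\<dots> = (\<rho> *\<^sub>v (mat_adjoint E *\<^sub>v v)) \<bullet>c (mat_adjoint E *\<^sub>v v)"
    using cscalar_prod_mat_adjoint[OF E _ v] \<rho>c w by simp
  also have "\<dots> \<ge> 0" using \<rho> w unfolding psd_mat_def by blast
  finally show "0 \<le> (E * \<rho> * mat_adjoint E *\<^sub>v v) \<bullet>c v" .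
qed

lemma mtrace_mult_congruence:
  assumes A: "A \<in> carrier_mat n n" and E: "E \<in> carrier_mat n d" and \<rho>: "\<rho> \<in> carrier_mat d d"
  shows "mtrace (A * (E * \<rho> * mat_adjoint E)) = mtrace (mat_adjoint E * A * E * \<rho>)"
proof -
  have aE: "mat_adjoint E \<in> carrier_mat d n" using E by simp
  have "A * (E * \<rho> * mat_adjoint E) = A * E * \<rho> * mat_adjoint E"
    using assoc_mult_mat[OF A mult_carrier_mat[OF E \<rho>] aE] assoc_mult_mat[OF A E \<rho>]
      assoc_mult_mat[OF E \<rho> aE] assoc_mult_mat[OF mult_carrier_mat[OF A E] \<rho> aE] by simp
  also have "mtrace \<dots> = mtrace (mat_adjoint E * (A * E * \<rho>))"
    using mtrace_mult_comm[OF mult_carrier_mat[OF mult_carrier_mat[OF A E] \<rho>] aE] .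
  also have "mat_adjoint E * (A * E * \<rho>) = mat_adjoint E * A * E * \<rho>"
    using assoc_mult_mat[OF aE A E] assoc_mult_mat[OF aE mult_carrier_mat[OF A E] \<rho>]
      assoc_mult_mat[OF mult_carrier_mat[OF aE A] E \<rho>] by simp
  finally show ?thesis .
qed

section \<open>Projection onto the column space\<close>

definition outer :: "complex vec \<Rightarrow> complex vec \<Rightarrow> complex mat" where
  "outer u w = mat (dim_vec u) (dim_vec w) (\<lambda>(i, j). u $ i * cnj (w $ j))"

lemma outer_carrier [simp]:
  "u \<in> carrier_vec n \<Longrightarrow> w \<in> carrier_vec m \<Longrightarrow> outer u w \<in> carrier_mat n m"
  unfolding outer_def by auto

lemma mult_outer:
  "A \<in> carrier_mat n k \<Longrightarrow> u \<in> carrier_vec k \<Longrightarrow> w \<in> carrier_vec m \<Longrightarrow>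
   A * outer u w = outer (A *\<^sub>v u) w"
  unfolding outer_def
  by (intro eq_matI) (auto simp: scalar_prod_def sum_distrib_left ac_simps intro!: sum.cong)

lemma outer_mult:
  "B \<in> carrier_mat m k \<Longrightarrow> u \<in> carrier_vec n \<Longrightarrow> w \<in> carrier_vec m \<Longrightarrow>
   outer u w * B = outer u (mat_adjoint B *\<^sub>v w)"
  unfolding outer_def
  by (intro eq_matI)
    (auto simp: scalar_prod_def sum_distrib_left sum_conjugate ac_simps intro!: sum.cong)

lemma outer_mult_vec:
  "u \<in> carrier_vec n \<Longrightarrow> w \<in> carrier_vec m \<Longrightarrow> x \<in> carrier_vec m \<Longrightarrow>
   outer u w *\<^sub>v x = (x \<bullet>c w) \<cdot>\<^sub>v u"
  unfolding outer_def by (intro eq_vecI) (auto simp: scalar_prod_def sum_distrib_left ac_simps)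

lemma outer_zero [simp]:
  "outer (0\<^sub>v n) w = 0\<^sub>m n (dim_vec w)" "outer u (0\<^sub>v m) = 0\<^sub>m (dim_vec u) m"
  unfolding outer_def by (auto intro: eq_matI)

lemma outer_smult_right: "outer u (a \<cdot>\<^sub>v w) = cnj a \<cdot>\<^sub>m outer u w"
  unfolding outer_def by (intro eq_matI) auto

lemma mat_adjoint_outer [simp]: "mat_adjoint (outer u w) = outer w u"
  unfolding outer_def by (intro eq_matI) auto

lemma mult_vec_add_outer:
  assumes "A \<in> carrier_mat n n" "u \<in> carrier_vec n" "x \<in> carrier_vec n"
  shows "(A + c \<cdot>\<^sub>m outer u u) *\<^sub>v x = A *\<^sub>v x + (c * (x \<bullet>c u)) \<cdot>\<^sub>v u"
  using assms
  by (simp add: add_mult_distrib_mat_vec[OF assms(1) _ assms(3)]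
      smult_mat_vec[OF outer_carrier[OF assms(2,2)] assms(3)] outer_mult_vec[OF assms(2,2,3)]
      smult_smult_assoc)

lemma projector_add_outer:
  assumes P: "is_projector n P" and u: "u \<in> carrier_vec n" "P *\<^sub>v u = 0\<^sub>v n" "u \<noteq> 0\<^sub>v n"
  defines "P' \<equiv> P + (1 / (u \<bullet>c u)) \<cdot>\<^sub>m outer u u"
  shows "is_projector n P'"
proof -
  define c where "c = u \<bullet>c u"
  have c: "c \<noteq> 0" "cnj c = c"
    using u cscalar_prod_self_real[OF u(1)] unfolding c_def by auto
  have Pc: "P \<in> carrier_mat n n" and PP: "P * P = P" and Ph: "mat_adjoint P = P"
    using P unfolding is_projector_def by auto
  have du: "dim_vec u = n" using u by auto
  define U where "U = (1 / c) \<cdot>\<^sub>m outer u u"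
  have uu: "outer u u \<in> carrier_mat n n" using u by simp
  have U: "U \<in> carrier_mat n n" unfolding U_def using uu by simp
  have "P * outer u u = 0\<^sub>m n n"
    using mult_outer[OF Pc u(1) u(1)] u du by simp
  then have PU: "P * U = 0\<^sub>m n n"
    unfolding U_def using mult_smult_distrib[OF Pc uu] by simp
  have "outer u u * P = 0\<^sub>m n n"
    using outer_mult[OF Pc u(1) u(1)] u du Ph by simp
  then have UP: "U * P = 0\<^sub>m n n"
    unfolding U_def using mult_smult_assoc_mat[OF uu Pc] by simp
  have "outer u u * outer u u = c \<cdot>\<^sub>m outer u u"
    using outer_mult[OF uu u(1) u(1)] outer_mult_vec[OF u(1) u(1) u(1)] c
    unfolding c_def by (simp add: outer_smult_right)
  then have "U * U = (1 / c * (1 / c)) \<cdot>\<^sub>m (c \<cdot>\<^sub>m outer u u)"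
    unfolding U_def by (simp add: smult_mult_smult_mat[OF uu uu])
  also have "\<dots> = U"
    unfolding U_def using c by (intro eq_matI) auto
  finally have UU: "U * U = U" .
  have "P' = P + U" unfolding P'_def U_def c_def ..
  moreover have "(P + U) * (P + U) = P + U"
    using Pc U PP PU UP UU
    by (simp add: add_mult_distrib_mat[OF Pc U add_carrier_mat[OF U]] mult_add_distrib_mat[OF Pc Pc U]
        mult_add_distrib_mat[OF U Pc U])
  moreover have "mat_adjoint (P + U) = P + U"
    unfolding U_def using Ph c by (simp add: mat_adjoint_add[OF Pc] uu mat_adjoint_smult)
  ultimately show "is_projector n P'"
    unfolding is_projector_def using Pc U by auto
qed

lemma mult_unit_vec_col: "(R :: complex mat) \<in> carrier_mat n m \<Longrightarrow> k < m \<Longrightarrow> R *\<^sub>v unit_vec m k = col R k"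
  by (intro eq_vecI) auto

lemma projector_residual:
  assumes P: "is_projector n P" and r: "r \<in> carrier_vec n"
  defines "u \<equiv> r - P *\<^sub>v r"
  shows "P *\<^sub>v u = 0\<^sub>v n" and "\<And>x. x \<in> carrier_vec n \<Longrightarrow> P *\<^sub>v x = x \<Longrightarrow> x \<bullet>c u = 0"
    and "r \<bullet>c u = u \<bullet>c u"
proof -
  have Pc: "P \<in> carrier_mat n n" and PP: "P * P = P" and Ph: "mat_adjoint P = P"
    using P unfolding is_projector_def by auto
  have u: "u \<in> carrier_vec n" unfolding u_def using r Pc by auto
  have "P *\<^sub>v u = P *\<^sub>v r - P *\<^sub>v (P *\<^sub>v r)"
    unfolding u_def using Pc r by (auto simp: mult_minus_distrib_mat_vec)
  also have "P *\<^sub>v (P *\<^sub>v r) = P *\<^sub>v r" using Pc r PP by (metis assoc_mult_mat_vec)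
  finally show Pu: "P *\<^sub>v u = 0\<^sub>v n" using Pc r by auto
  show "x \<bullet>c u = 0" if "x \<in> carrier_vec n" "P *\<^sub>v x = x" for x
    using cscalar_prod_mat_adjoint[OF Pc that(1) u] that Ph Pu by auto
  have "r = u + P *\<^sub>v r" unfolding u_def using r Pc by auto
  then have "r \<bullet>c u = u \<bullet>c u + (P *\<^sub>v r) \<bullet>c u"
    by (metis add_scalar_prod_distrib carrier_vec_conjugate mult_mat_vec_carrier u Pc r)
  also have "(P *\<^sub>v r) \<bullet>c u = 0"
    using cscalar_prod_mat_adjoint[OF Pc r u] Ph Pu r by auto
  finally show "r \<bullet>c u = u \<bullet>c u" by simp
qed

lemma projector_extend_residual:
  fixes R :: "complex mat"
  assumes P: "is_projector n P" and R: "R \<in> carrier_mat n m" and M: "M \<in> carrier_mat m n"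
    and PRM: "P = R * M" and k: "k < m"
  defines "u \<equiv> col R k - P *\<^sub>v col R k"
  assumes u0: "u \<noteq> 0\<^sub>v n"
  shows "\<exists>P' M'. is_projector n P' \<and> M' \<in> carrier_mat m n \<and> P' = R * M'
    \<and> P' *\<^sub>v col R k = col R k \<and> (\<forall>x \<in> carrier_vec n. P *\<^sub>v x = x \<longrightarrow> P' *\<^sub>v x = x)"
proof -
  have Pc: "P \<in> carrier_mat n n" using P unfolding is_projector_def by auto
  define r where "r = col R k"
  have r: "r \<in> carrier_vec n" unfolding r_def using R k by auto
  have u: "u \<in> carrier_vec n" unfolding u_def using R k Pc by auto
  note res = projector_residual[OF P r, unfolded r_def, folded u_def]
  define P' where "P' = P + (1 / (u \<bullet>c u)) \<cdot>\<^sub>m outer u u"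
  have P': "is_projector n P'"
    unfolding P'_def by (rule projector_add_outer[OF P u res(1) u0])
  have P'x: "P' *\<^sub>v x = P *\<^sub>v x + (1 / (u \<bullet>c u) * (x \<bullet>c u)) \<cdot>\<^sub>v u" if "x \<in> carrier_vec n" for x
    unfolding P'_def by (rule mult_vec_add_outer[OF Pc u that])
  have "P' *\<^sub>v x = x" if "x \<in> carrier_vec n" "P *\<^sub>v x = x" for x
  proof -
    have "P' *\<^sub>v x = x + 0 \<cdot>\<^sub>v u" using P'x[OF that(1)] res(2)[OF that] that(2) by auto
    also have "\<dots> = x" using that(1) u by (intro eq_vecI) auto
    finally show ?thesis .
  qed
  moreover have "P' *\<^sub>v r = r"
  proof -
    have "P' *\<^sub>v r = P *\<^sub>v r + u" using P'x[OF r] res(3) u0 u by (simp add: r_def)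
    also have "\<dots> = r" unfolding u_def r_def[symmetric] using r Pc by (intro eq_vecI) auto
    finally show ?thesis .
  qed
  moreover define y where "y = unit_vec m k - M *\<^sub>v r"
  have y: "y \<in> carrier_vec m" unfolding y_def using M r by auto
  have "R *\<^sub>v y = u"
    unfolding y_def u_def r_def PRM using R M k
    by (simp add: mult_minus_distrib_mat_vec[OF R] mult_unit_vec_col)
  then have "P' = R * (M + (1 / (u \<bullet>c u)) \<cdot>\<^sub>m outer y u)"
    unfolding P'_def PRM using R M y u
    by (simp add: mult_add_distrib_mat[OF R M] mult_smult_distrib[OF R outer_carrier[OF y u]]
        mult_outer[OF R y u])
  moreover have "M + (1 / (u \<bullet>c u)) \<cdot>\<^sub>m outer y u \<in> carrier_mat m n" using M y u by simp
  ultimately show ?thesis using P' unfolding r_def by blast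
qed

(* Gram-Schmidt: each step adds the rank-one projector onto the residual of the next column. *)

lemma range_projector_on_cols:
  fixes R :: "complex mat"
  assumes R: "R \<in> carrier_mat n m" and "k \<le> m"
  shows "\<exists>P M. is_projector n P \<and> M \<in> carrier_mat m n \<and> P = R * M
    \<and> (\<forall>j<k. P *\<^sub>v col R j = col R j)"
  using \<open>k \<le> m\<close>
proof (induction k)
  case 0
  have "is_projector n (0\<^sub>m n n)" unfolding is_projector_def by auto
  then show ?case using R by (intro exI[of _ "0\<^sub>m n n"] exI[of _ "0\<^sub>m m n"]) auto
next
  case (Suc k)
  then obtain P M where P: "is_projector n P" and M: "M \<in> carrier_mat m n" and PRM: "P = R * M"
    and fixed: "\<forall>j<k. P *\<^sub>v col R j = col R j" by auto
  have Pc: "P \<in> carrier_mat n n" using P unfolding is_projector_def by auto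
  have k: "k < m" using Suc by auto
  have r: "col R k \<in> carrier_vec n" using R k by auto
  show ?case
  proof (cases "col R k - P *\<^sub>v col R k = 0\<^sub>v n")
    case True
    have "P *\<^sub>v col R k = col R k"
    proof (rule eq_vecI)
      fix i assume "i < dim_vec (col R k)"
      then show "(P *\<^sub>v col R k) $ i = col R k $ i"
        using arg_cong[OF True, of "\<lambda>v. v $ i"] r Pc R by auto
    qed (use Pc r R in auto)
    then show ?thesis using P M PRM fixed by (intro exI[of _ P] exI[of _ M]) (auto simp: less_Suc_eq)
  next
    case False
    obtain P' M' where "is_projector n P'" "M' \<in> carrier_mat m n" "P' = R * M'"
      "P' *\<^sub>v col R k = col R k" and keep: "\<forall>x \<in> carrier_vec n. P *\<^sub>v x = x \<longrightarrow> P' *\<^sub>v x = x"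
      using projector_extend_residual[OF P R M PRM k False] by blast
    moreover have "\<forall>j<k. P' *\<^sub>v col R j = col R j" using keep fixed R k by auto
    ultimately show ?thesis by (intro exI[of _ P'] exI[of _ M']) (auto simp: less_Suc_eq)
  qed
qed

lemma range_projector:
  fixes R :: "complex mat"
  assumes R: "R \<in> carrier_mat n m"
  shows "\<exists>P M. is_projector n P \<and> M \<in> carrier_mat m n \<and> P = R * M \<and> P * R = R"
proof -
  obtain P M where P: "is_projector n P" "M \<in> carrier_mat m n" "P = R * M"
    and cols: "\<forall>j<m. P *\<^sub>v col R j = col R j"
    using range_projector_on_cols[OF R le_refl] by blast
  have Pc: "P \<in> carrier_mat n n" using P(1) unfolding is_projector_def by auto
  have "P * R = R"
  proof (rule eq_matI)
    fix i j assume ij: "i < dim_row R" "j < dim_col R"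
    then have "(P * R) $$ (i, j) = (P *\<^sub>v col R j) $ i" using Pc R by auto
    then show "(P * R) $$ (i, j) = R $$ (i, j)" using cols ij R by auto
  qed (use Pc R in auto)
  then show ?thesis using P by blast
qed

section \<open>Compressions of projectors\<close>

lemma mtrace_projector_mono:
  assumes Q: "is_projector n Q" and P: "is_projector n P" and PQ: "P * Q = Q"
    and A: "psd_mat n A"
  shows "mtrace (Q * A) \<le> mtrace (P * A)"
proof -
  have Qc: "Q \<in> carrier_mat n n" and QQ: "Q * Q = Q" and Qh: "mat_adjoint Q = Q"
    using Q unfolding is_projector_def by auto
  have Pc: "P \<in> carrier_mat n n" and PP: "P * P = P" and Ph: "mat_adjoint P = P"
    using P unfolding is_projector_def by auto
  have Ac: "A \<in> carrier_mat n n" using A unfolding psd_mat_def by auto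
  have "mat_adjoint (P * Q) = mat_adjoint Q * mat_adjoint P" by (rule mat_adjoint_mult[OF Pc Qc])
  then have QP: "Q * P = Q" unfolding PQ Ph Qh by (rule sym)
  define W where "W = P - Q"
  have W: "W \<in> carrier_mat n n" unfolding W_def using Qc by (simp add: minus_carrier_mat)
  have "W * W = (P * P - P * Q) - (Q * P - Q * Q)"
    unfolding W_def using Pc Qc
    by (simp add: minus_mult_distrib_mat[OF Pc Qc minus_carrier_mat[OF Qc]]
        mult_minus_distrib_mat[OF Pc Pc Qc] mult_minus_distrib_mat[OF Qc Pc Qc])
  also have "\<dots> = W" unfolding PP PQ QP QQ W_def using Pc Qc by (intro eq_matI) auto
  finally have WW: "mat_adjoint W * W = W"
    unfolding W_def mat_adjoint_minus[OF Pc Qc] Ph Qh .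
  have "mtrace (P * A) - mtrace (Q * A) = mtrace (W * A)"
    unfolding W_def using Pc Qc Ac
    by (simp add: minus_mult_distrib_mat[OF Pc Qc Ac] mtrace_minus[of _ n])
  also have "\<dots> \<ge> 0"
    using mtrace_gram_mult_nonneg[OF A W] unfolding WW .
  finally show ?thesis by simp
qed

lemma projector_of_partial_isometry:
  assumes X: "X \<in> carrier_mat n d" and P: "is_projector d P"
    and XX: "mat_adjoint X * X = P" and XP: "X * P = X"
  shows "is_projector n (X * mat_adjoint X)"
proof -
  have aX: "mat_adjoint X \<in> carrier_mat d n" using X by simp
  have "X * mat_adjoint X * (X * mat_adjoint X) = X * (mat_adjoint X * X) * mat_adjoint X"
    using assoc_mult_mat[OF X aX mult_carrier_mat[OF X aX]] assoc_mult_mat[OF aX X aX]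
      assoc_mult_mat[OF X mult_carrier_mat[OF aX X] aX] by simp
  also have "\<dots> = X * mat_adjoint X" unfolding XX XP ..
  finally show ?thesis
    unfolding is_projector_def using X aX by (simp add: mat_adjoint_mult[OF X aX])
qed

lemma mtrace_lower_bound_partial_isometry:
  fixes s :: real
  assumes Ph: "is_projector n Ph" and X: "X \<in> carrier_mat n d" and PhX: "Ph * X = X"
    and P: "is_projector d P" and XX: "mat_adjoint X * X = P" and XP: "X * P = X"
    and E: "E \<in> carrier_mat n d" and EX: "mat_adjoint E * X = complex_of_real s \<cdot>\<^sub>m P"
    and \<rho>: "psd_mat d \<rho>"
  shows "complex_of_real (s\<^sup>2) * mtrace (P * \<rho>) \<le> mtrace (Ph * (E * \<rho> * mat_adjoint E))"
proof -
  have Phc: "Ph \<in> carrier_mat n n" using Ph unfolding is_projector_def by auto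
  have Pc: "P \<in> carrier_mat d d" and PP: "P * P = P" and Ph': "mat_adjoint P = P"
    using P unfolding is_projector_def by auto
  have \<rho>c: "\<rho> \<in> carrier_mat d d" using \<rho> unfolding psd_mat_def by auto
  have aX: "mat_adjoint X \<in> carrier_mat d n" and aE: "mat_adjoint E \<in> carrier_mat d n"
    using X E by auto
  have XXc: "X * mat_adjoint X \<in> carrier_mat n n" using mult_carrier_mat[OF X aX] .
  have XE: "mat_adjoint X * E = complex_of_real s \<cdot>\<^sub>m P"
    using mat_adjoint_mult[OF aE X] EX Ph' by simp
  have "complex_of_real (s\<^sup>2) * mtrace (P * \<rho>)
      = mtrace ((complex_of_real s \<cdot>\<^sub>m P) * (complex_of_real s \<cdot>\<^sub>m P) * \<rho>)"
    using PP by (simp add: smult_mult_smult_mat[OF Pc Pc] mult_smult_assoc_mat[OF Pc \<rho>c]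
        mtrace_smult[OF mult_carrier_mat[OF Pc \<rho>c]] power2_eq_square)
  also have "(complex_of_real s \<cdot>\<^sub>m P) * (complex_of_real s \<cdot>\<^sub>m P)
      = mat_adjoint E * X * (mat_adjoint X * E)"
    unfolding EX XE ..
  also have "\<dots> = mat_adjoint E * (X * mat_adjoint X) * E"
    using assoc_mult_mat[OF aE XXc E] assoc_mult_mat[OF X aX E]
      assoc_mult_mat[OF aE X mult_carrier_mat[OF aX E]] by simp
  also have "mtrace (mat_adjoint E * (X * mat_adjoint X) * E * \<rho>)
      = mtrace (X * mat_adjoint X * (E * \<rho> * mat_adjoint E))"
    by (rule mtrace_mult_congruence[OF XXc E \<rho>c, symmetric])
  also have "\<dots> \<le> mtrace (Ph * (E * \<rho> * mat_adjoint E))"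
  proof (rule mtrace_projector_mono[OF _ Ph _ psd_mat_congruence[OF \<rho> E]])
    show "is_projector n (X * mat_adjoint X)"
      by (rule projector_of_partial_isometry[OF X P XX XP])
    show "Ph * (X * mat_adjoint X) = X * mat_adjoint X"
      using assoc_mult_mat[OF Phc X aX, symmetric] PhX by simp
  qed
  finally show ?thesis .
qed

lemma compression_factor:
  fixes s t :: real
  assumes E: "E \<in> carrier_mat n d" and R: "R \<in> carrier_mat n k" and V: "V \<in> carrier_mat k d"
    and W: "W \<in> carrier_mat k d" and Ph: "is_projector n Ph" and PhE: "Ph * E = R * W"
    and ER: "mat_adjoint E * R = complex_of_real s \<cdot>\<^sub>m mat_adjoint V"
  defines "T \<equiv> mat_adjoint E * Ph * E"
  shows "T = complex_of_real s \<cdot>\<^sub>m (mat_adjoint V * W)" and "mat_adjoint T = T"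
proof -
  have Phc: "Ph \<in> carrier_mat n n" and Phh: "mat_adjoint Ph = Ph"
    using Ph unfolding is_projector_def by auto
  have aE: "mat_adjoint E \<in> carrier_mat d n" and aV: "mat_adjoint V \<in> carrier_mat d k"
    using E V by auto
  have "T = mat_adjoint E * (Ph * E)" unfolding T_def by (rule assoc_mult_mat[OF aE Phc E])
  also have "\<dots> = mat_adjoint E * R * W" unfolding PhE by (rule assoc_mult_mat[OF aE R W, symmetric])
  also have "\<dots> = complex_of_real s \<cdot>\<^sub>m (mat_adjoint V * W)"
    unfolding ER by (rule mult_smult_assoc_mat[OF aV W])
  finally show "T = complex_of_real s \<cdot>\<^sub>m (mat_adjoint V * W)" .
  show "mat_adjoint T = T"
    unfolding T_def
    by (simp add: assoc_mult_mat[OF aE Phc E] mat_adjoint_mult[OF aE mult_carrier_mat[OF Phc E]]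
        mat_adjoint_mult[OF Phc E] Phh)
qed

lemma compression_square_split:
  fixes s t :: real
  assumes E: "E \<in> carrier_mat n d" and R: "R \<in> carrier_mat n k" and V: "V \<in> carrier_mat k d"
    and W: "W \<in> carrier_mat k d" and Ph: "is_projector n Ph" and PhE: "Ph * E = R * W"
    and ER: "mat_adjoint E * R = complex_of_real s \<cdot>\<^sub>m mat_adjoint V"
    and RRW: "mat_adjoint R * (R * W)
      = complex_of_real (s\<^sup>2) \<cdot>\<^sub>m (V * (mat_adjoint V * W)) + complex_of_real (t\<^sup>2) \<cdot>\<^sub>m W"
  defines "T \<equiv> mat_adjoint E * Ph * E"
  shows "T = mat_adjoint T * T + complex_of_real (t\<^sup>2) \<cdot>\<^sub>m (mat_adjoint W * W)"
proof -
  define a where "a = complex_of_real s"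
  have a2: "complex_of_real (s\<^sup>2) = a * a" unfolding a_def by (simp add: power2_eq_square)
  have Phc: "Ph \<in> carrier_mat n n" and PhPh: "Ph * Ph = Ph" and Phh: "mat_adjoint Ph = Ph"
    using Ph unfolding is_projector_def by auto
  have aE: "mat_adjoint E \<in> carrier_mat d n" and aV: "mat_adjoint V \<in> carrier_mat d k"
    and aW: "mat_adjoint W \<in> carrier_mat d k" and aR: "mat_adjoint R \<in> carrier_mat k n"
    using E V W R by auto
  have VW: "mat_adjoint V * W \<in> carrier_mat d d" and WV: "mat_adjoint W * V \<in> carrier_mat d d"
    using mult_carrier_mat[OF aV W] mult_carrier_mat[OF aW V] by auto
  note T_VW = compression_factor(1)[OF E R V W Ph PhE ER, folded T_def a_def]
  have T_WV: "mat_adjoint T = a \<cdot>\<^sub>m (mat_adjoint W * V)"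
    unfolding T_VW a_def by (simp add: mat_adjoint_mult[OF aV W])
  have EPh: "mat_adjoint E * Ph = mat_adjoint W * mat_adjoint R"
    using arg_cong[OF PhE, of mat_adjoint] Phh
    by (simp add: mat_adjoint_mult[OF Phc E] mat_adjoint_mult[OF R W])
  have "T = mat_adjoint E * (Ph * Ph) * E" unfolding T_def PhPh ..
  also have "\<dots> = (mat_adjoint E * Ph) * (Ph * E)"
    using assoc_mult_mat[OF aE Phc Phc] assoc_mult_mat[OF mult_carrier_mat[OF aE Phc] Phc E] by simp
  also have "\<dots> = mat_adjoint W * (mat_adjoint R * (R * W))"
    unfolding EPh PhE using assoc_mult_mat[OF aW aR mult_carrier_mat[OF R W]] by simp
  also have "\<dots> = (a * a) \<cdot>\<^sub>m (mat_adjoint W * V * (mat_adjoint V * W))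
      + complex_of_real (t\<^sup>2) \<cdot>\<^sub>m (mat_adjoint W * W)"
    unfolding RRW a2
    using mult_add_distrib_mat[OF aW smult_carrier_mat[OF mult_carrier_mat[OF V VW]]
        smult_carrier_mat[OF W]]
      mult_smult_distrib[OF aW mult_carrier_mat[OF V VW]] mult_smult_distrib[OF aW W]
      assoc_mult_mat[OF aW V VW] by simp
  also have "(a * a) \<cdot>\<^sub>m (mat_adjoint W * V * (mat_adjoint V * W))
      = (a \<cdot>\<^sub>m (mat_adjoint W * V)) * (a \<cdot>\<^sub>m (mat_adjoint V * W))"
    by (rule smult_mult_smult_mat[OF WV VW, symmetric])
  also have "\<dots> = mat_adjoint T * T" unfolding T_WV[symmetric] T_VW[symmetric] ..
  finally show ?thesis .
qed

lemma gram_real_smult_minus: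
  fixes a b :: real
  assumes V: "V \<in> carrier_mat k d" and W: "W \<in> carrier_mat k d"
  defines "Y \<equiv> complex_of_real a \<cdot>\<^sub>m V - complex_of_real b \<cdot>\<^sub>m W"
  shows "mat_adjoint Y * Y = complex_of_real (a * a) \<cdot>\<^sub>m (mat_adjoint V * V)
    - complex_of_real (a * b) \<cdot>\<^sub>m (mat_adjoint V * W) - complex_of_real (b * a) \<cdot>\<^sub>m (mat_adjoint W * V)
    + complex_of_real (b * b) \<cdot>\<^sub>m (mat_adjoint W * W)"
proof -
  have aV: "mat_adjoint V \<in> carrier_mat d k" and aW: "mat_adjoint W \<in> carrier_mat d k"
    using V W by auto
  show ?thesis
    unfolding Y_def gram_minus[OF smult_carrier_mat[OF V] smult_carrier_mat[OF W]]
    by (simp add: smult_mult_smult_mat[OF aV V] smult_mult_smult_mat[OF aV W]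
        smult_mult_smult_mat[OF aW V] smult_mult_smult_mat[OF aW W])
qed

lemma gram_identity_of_factorization:
  fixes a b :: real
  assumes V: "V \<in> carrier_mat k d" and W: "W \<in> carrier_mat k d" and T: "T \<in> carrier_mat d d"
    and T_VW: "T = complex_of_real a \<cdot>\<^sub>m (mat_adjoint V * W)" and Th: "mat_adjoint T = T"
    and T_TT: "T = mat_adjoint T * T + complex_of_real b \<cdot>\<^sub>m (mat_adjoint W * W)"
  defines "Y \<equiv> complex_of_real a \<cdot>\<^sub>m V - complex_of_real b \<cdot>\<^sub>m W"
  shows "complex_of_real (a\<^sup>2) \<cdot>\<^sub>m (mat_adjoint V * V)
    = mat_adjoint Y * Y + complex_of_real b \<cdot>\<^sub>m (T + mat_adjoint T * T)"
proof -
  define \<alpha> where "\<alpha> = complex_of_real a"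
  define \<beta> where "\<beta> = complex_of_real b"
  have aV: "mat_adjoint V \<in> carrier_mat d k" and aW: "mat_adjoint W \<in> carrier_mat d k"
    using V W by auto
  have VW: "mat_adjoint V * W \<in> carrier_mat d d" and WV: "mat_adjoint W * V \<in> carrier_mat d d"
    and WW: "mat_adjoint W * W \<in> carrier_mat d d" and VV: "mat_adjoint V * V \<in> carrier_mat d d"
    and TT: "mat_adjoint T * T \<in> carrier_mat d d"
    using mult_carrier_mat[OF aV W] mult_carrier_mat[OF aW V] mult_carrier_mat[OF aW W]
      mult_carrier_mat[OF aV V] mult_carrier_mat[OF mat_adjoint_carrier[OF T] T] by auto
  have T_WV: "mat_adjoint T = \<alpha> \<cdot>\<^sub>m (mat_adjoint W * V)"
    unfolding T_VW \<alpha>_def by (simp add: mat_adjoint_mult[OF aV W])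
  have YY: "mat_adjoint Y * Y = (\<alpha> * \<alpha>) \<cdot>\<^sub>m (mat_adjoint V * V) - (\<alpha> * \<beta>) \<cdot>\<^sub>m (mat_adjoint V * W)
      - (\<beta> * \<alpha>) \<cdot>\<^sub>m (mat_adjoint W * V) + (\<beta> * \<beta>) \<cdot>\<^sub>m (mat_adjoint W * W)"
    unfolding Y_def gram_real_smult_minus[OF V W] \<alpha>_def \<beta>_def by simp
  show ?thesis
    unfolding \<beta>_def[symmetric]
  proof (rule eq_matI)
    fix i j assume "i < dim_row (mat_adjoint Y * Y + \<beta> \<cdot>\<^sub>m (T + mat_adjoint T * T))"
      "j < dim_col (mat_adjoint Y * Y + \<beta> \<cdot>\<^sub>m (T + mat_adjoint T * T))"
    then have ij: "i < d" "j < d" using T TT by auto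
    note dims = carrier_matD[OF V] carrier_matD[OF W] carrier_matD[OF T]
    let ?A = "(mat_adjoint V * W) $$ (i, j)" and ?B = "(mat_adjoint W * V) $$ (i, j)"
      and ?C = "(mat_adjoint W * W) $$ (i, j)" and ?S = "(mat_adjoint V * V) $$ (i, j)"
      and ?\<tau> = "T $$ (i, j)" and ?q = "(mat_adjoint T * T) $$ (i, j)"
    have f1: "\<alpha> * ?A = ?\<tau>"
      using arg_cong[OF T_VW, of "\<lambda>M. M $$ (i, j)"] ij VW dims unfolding \<alpha>_def by simp
    have "mat_adjoint T $$ (i, j) = \<alpha> * ?B"
      using arg_cong[OF T_WV, of "\<lambda>M. M $$ (i, j)"] ij WV dims by simp
    then have f2: "\<alpha> * ?B = ?\<tau>" using Th by simp
    have f3: "\<beta> * ?C = ?\<tau> - ?q"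
      using arg_cong[OF T_TT, of "\<lambda>M. M $$ (i, j)"] ij TT WW dims unfolding \<beta>_def by simp
    have lhs: "(complex_of_real (a\<^sup>2) \<cdot>\<^sub>m (mat_adjoint V * V)) $$ (i, j) = \<alpha> * \<alpha> * ?S"
      using ij VV dims unfolding \<alpha>_def by (simp add: power2_eq_square)
    have "(mat_adjoint Y * Y + \<beta> \<cdot>\<^sub>m (T + mat_adjoint T * T)) $$ (i, j)
      = \<alpha> * \<alpha> * ?S - \<beta> * (\<alpha> * ?A) - \<beta> * (\<alpha> * ?B) + \<beta> * (\<beta> * ?C) + \<beta> * (?\<tau> + ?q)"
      unfolding YY using ij VV VW WV WW T TT dims by (simp add: algebra_simps)
    also have "\<dots> = \<alpha> * \<alpha> * ?S - \<beta> * ?\<tau> - \<beta> * ?\<tau> + \<beta> * (?\<tau> - ?q) + \<beta> * (?\<tau> + ?q)"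
      unfolding f1 f2 f3 ..
    also have "\<dots> = \<alpha> * \<alpha> * ?S" by (simp add: algebra_simps)
    finally show "(complex_of_real (a\<^sup>2) \<cdot>\<^sub>m (mat_adjoint V * V)) $$ (i, j)
      = (mat_adjoint Y * Y + \<beta> \<cdot>\<^sub>m (T + mat_adjoint T * T)) $$ (i, j)"
      unfolding lhs by simp
  qed (use VV T TT in auto)
qed

lemma mtrace_compression_le:
  fixes s t :: real
  assumes E: "E \<in> carrier_mat n d" and R: "R \<in> carrier_mat n k" and V: "V \<in> carrier_mat k d"
    and W: "W \<in> carrier_mat k d" and Ph: "is_projector n Ph" and PhE: "Ph * E = R * W"
    and ER: "mat_adjoint E * R = complex_of_real s \<cdot>\<^sub>m mat_adjoint V"
    and RRW: "mat_adjoint R * (R * W)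
      = complex_of_real (s\<^sup>2) \<cdot>\<^sub>m (V * (mat_adjoint V * W)) + complex_of_real (t\<^sup>2) \<cdot>\<^sub>m W"
    and \<sigma>: "psd_mat d \<sigma>"
  shows "complex_of_real (t\<^sup>2) * mtrace (mat_adjoint E * Ph * E * \<sigma>)
    \<le> complex_of_real (s\<^sup>2) * mtrace (mat_adjoint V * V * \<sigma>)"
proof -
  define T where "T = mat_adjoint E * Ph * E"
  define Y where "Y = complex_of_real s \<cdot>\<^sub>m V - complex_of_real (t\<^sup>2) \<cdot>\<^sub>m W"
  have Phc: "Ph \<in> carrier_mat n n" using Ph unfolding is_projector_def by auto
  have \<sigma>c: "\<sigma> \<in> carrier_mat d d" using \<sigma> unfolding psd_mat_def by auto
  have T: "T \<in> carrier_mat d d"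
    unfolding T_def using mult_carrier_mat[OF mult_carrier_mat[OF mat_adjoint_carrier[OF E] Phc] E] .
  have Y: "Y \<in> carrier_mat k d" unfolding Y_def using V W by (simp add: minus_carrier_mat)
  have YY: "mat_adjoint Y * Y \<in> carrier_mat d d" and TT: "mat_adjoint T * T \<in> carrier_mat d d"
    and VV: "mat_adjoint V * V \<in> carrier_mat d d"
    using mult_carrier_mat[OF mat_adjoint_carrier[OF Y] Y] mult_carrier_mat[OF mat_adjoint_carrier[OF T] T]
      mult_carrier_mat[OF mat_adjoint_carrier[OF V] V] by auto
  have "complex_of_real (s\<^sup>2) * mtrace (mat_adjoint V * V * \<sigma>)
      = mtrace ((complex_of_real (s\<^sup>2) \<cdot>\<^sub>m (mat_adjoint V * V)) * \<sigma>)"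
    by (rule mtrace_smult_mult[OF VV \<sigma>c, symmetric])
  also have "complex_of_real (s\<^sup>2) \<cdot>\<^sub>m (mat_adjoint V * V)
      = mat_adjoint Y * Y + complex_of_real (t\<^sup>2) \<cdot>\<^sub>m (T + mat_adjoint T * T)"
    unfolding Y_def
    by (rule gram_identity_of_factorization[OF V W T
          compression_factor[OF E R V W Ph PhE ER, folded T_def]
          compression_square_split[OF E R V W Ph PhE ER RRW, folded T_def]])
  also have "mtrace (\<dots> * \<sigma>) = mtrace (mat_adjoint Y * Y * \<sigma>)
      + complex_of_real (t\<^sup>2) * mtrace (T * \<sigma>) + complex_of_real (t\<^sup>2) * mtrace (mat_adjoint T * T * \<sigma>)"
    by (simp only: mtrace_add_mult[OF YY smult_carrier_mat[OF add_carrier_mat[OF TT]] \<sigma>c]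
        mtrace_smult_mult[OF add_carrier_mat[OF TT] \<sigma>c] mtrace_add_mult[OF T TT \<sigma>c]
        distrib_left add.assoc)
  finally have eq: "complex_of_real (s\<^sup>2) * mtrace (mat_adjoint V * V * \<sigma>)
      = complex_of_real (t\<^sup>2) * mtrace (T * \<sigma>)
        + (mtrace (mat_adjoint Y * Y * \<sigma>) + complex_of_real (t\<^sup>2) * mtrace (mat_adjoint T * T * \<sigma>))"
    by (simp add: algebra_simps)
  have "0 \<le> mtrace (mat_adjoint Y * Y * \<sigma>) + complex_of_real (t\<^sup>2) * mtrace (mat_adjoint T * T * \<sigma>)"
    using mtrace_gram_mult_nonneg[OF \<sigma> Y] mtrace_gram_mult_nonneg[OF \<sigma> T]
    by (intro add_nonneg_nonneg mult_nonneg_nonneg) (auto simp: less_eq_complex_def)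
  then show ?thesis unfolding T_def[symmetric] eq by simp
qed

section \<open>The block matrices of the construction\<close>

lemma block_index_less: "i < l \<Longrightarrow> b < d \<Longrightarrow> i * d + b < l * (d :: nat)"
proof -
  assume "i < l" "b < d"
  then have "(i + 1) * d \<le> l * d" by (intro mult_right_mono) auto
  then show ?thesis using \<open>b < d\<close> by (simp add: algebra_simps)
qed

lemma block_div_less: "r < l * d \<Longrightarrow> r div d < (l :: nat)"
  by (simp add: less_mult_imp_div_less)

lemma block_mod_less: "r < l * d \<Longrightarrow> r mod d < (d :: nat)"
  by (cases "d = 0") auto


lemma sum_lessThan_blocks:
  fixes l d :: nat
  shows "(\<Sum>r<l * d. f r) = (\<Sum>i<l. \<Sum>b<d. f (i * d + b))"
proof -
  have "(\<Sum>r<l * d. f r) = (\<Sum>i<l. sum f {i * d..<i * d + d})"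
    by (rule sum.nat_group[symmetric])
  also have "\<dots> = (\<Sum>i<l. \<Sum>b<d. f (i * d + b))"
  proof (rule sum.cong[OF refl])
    fix i
    have "sum f {0 + i * d..<d + i * d} = (\<Sum>b = 0..<d. f (b + i * d))"
      by (rule sum.shift_bounds_nat_ivl)
    then show "sum f {i * d..<i * d + d} = (\<Sum>b<d. f (i * d + b))"
      by (simp add: atLeast0LessThan add.commute)
  qed
  finally show ?thesis .
qed

lemma index_mult_mat_one_block:
  assumes A: "A \<in> carrier_mat n (l * d)" and B: "B \<in> carrier_mat (l * d) m"
    and "r < n" "c < m" "i < l"
    and zero: "\<And>a. a < l * d \<Longrightarrow> a div d \<noteq> i \<Longrightarrow> A $$ (r, a) * B $$ (a, c) = 0"
  shows "(A * B) $$ (r, c) = (\<Sum>b<d. A $$ (r, i * d + b) * B $$ (i * d + b, c))"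
proof -
  have "(A * B) $$ (r, c) = (\<Sum>j<l. \<Sum>b<d. A $$ (r, j * d + b) * B $$ (j * d + b, c))"
    using assms by (subst index_mult_mat_sum[OF A B]) (simp_all add: sum_lessThan_blocks)
  also have "\<dots> = (\<Sum>j\<in>{i}. \<Sum>b<d. A $$ (r, j * d + b) * B $$ (j * d + b, c))"
    using \<open>i < l\<close> zero block_index_less by (intro sum.mono_neutral_right) auto
  finally show ?thesis by simp
qed

lemma projector_index_square:
  assumes "is_projector d P" "x < d" "c < d"
  shows "(\<Sum>a<d. P $$ (x, a) * P $$ (a, c)) = P $$ (x, c)"
proof -
  have "P \<in> carrier_mat d d" and "P * P = P" using assms unfolding is_projector_def by auto
  then show ?thesis using assms by (metis index_mult_mat_sum)
qed

lemma projector_index_cnj: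
  assumes "is_projector d P" "x < d" "c < d"
  shows "cnj (P $$ (x, c)) = P $$ (c, x)"
proof -
  have "P \<in> carrier_mat d d" and "mat_adjoint P = P" using assms unfolding is_projector_def by auto
  then show ?thesis using assms by (metis index_mat_adjoint carrier_matD)
qed

(* Coordinates of H \<oplus> H\<^sub>1 \<oplus> \<dots> \<oplus> H\<^sub>l: index r < d lies in H, index d + i * d + b is coordinate b
  of H\<^sub>i\<^sub>+\<^sub>1 (the projector family P is indexed from 0). Column i * d + b of lift_mat d l P s t
  is the vector s P\<^sub>i e\<^sub>b \<oplus> t P\<^sub>i e\<^sub>b, its second component placed in that summand. *)

definition fst_incl :: "nat \<Rightarrow> nat \<Rightarrow> complex mat" where
  "fst_incl d l = mat (d + l * d) d (\<lambda>(r, c). if r = c then 1 else 0)"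

definition snd_incl :: "nat \<Rightarrow> nat \<Rightarrow> complex mat" where
  "snd_incl d l = mat (d + l * d) (l * d) (\<lambda>(r, c). if r = d + c then 1 else 0)"

definition proj_stack :: "nat \<Rightarrow> nat \<Rightarrow> (nat \<Rightarrow> complex mat) \<Rightarrow> complex mat" where
  "proj_stack d l P = mat (l * d) d (\<lambda>(r, c). P (r div d) $$ (r mod d, c))"

definition proj_diag :: "nat \<Rightarrow> nat \<Rightarrow> (nat \<Rightarrow> complex mat) \<Rightarrow> complex mat" where
  "proj_diag d l P = mat (l * d) (l * d)
     (\<lambda>(r, c). if r div d = c div d then P (r div d) $$ (r mod d, c mod d) else 0)"

definition proj_block :: "nat \<Rightarrow> nat \<Rightarrow> (nat \<Rightarrow> complex mat) \<Rightarrow> nat \<Rightarrow> complex mat" where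
  "proj_block d l P i = mat (l * d) d (\<lambda>(r, c). if r div d = i then P i $$ (r mod d, c) else 0)"

definition proj_sum :: "nat \<Rightarrow> nat \<Rightarrow> (nat \<Rightarrow> complex mat) \<Rightarrow> complex mat" where
  "proj_sum d l P = mat d d (\<lambda>(b, c). \<Sum>i<l. P i $$ (b, c))"

definition lift_mat :: "nat \<Rightarrow> nat \<Rightarrow> (nat \<Rightarrow> complex mat) \<Rightarrow> real \<Rightarrow> real \<Rightarrow> complex mat" where
  "lift_mat d l P s t = mat (d + l * d) (l * d) (\<lambda>(r, c).
     if r < d then complex_of_real s * cnj (P (c div d) $$ (c mod d, r))
     else if (r - d) div d = c div d then complex_of_real t * P (c div d) $$ ((r - d) mod d, c mod d)
     else 0)"

lemma block_mats_carrier [simp]: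
  "fst_incl d l \<in> carrier_mat (d + l * d) d"
  "snd_incl d l \<in> carrier_mat (d + l * d) (l * d)"
  "proj_stack d l P \<in> carrier_mat (l * d) d"
  "proj_diag d l P \<in> carrier_mat (l * d) (l * d)"
  "proj_block d l P i \<in> carrier_mat (l * d) d"
  "proj_sum d l P \<in> carrier_mat d d"
  "lift_mat d l P s t \<in> carrier_mat (d + l * d) (l * d)"
  unfolding fst_incl_def snd_incl_def proj_stack_def proj_diag_def proj_block_def proj_sum_def
    lift_mat_def by auto

lemma block_mats_dim [simp]:
  "dim_row (fst_incl d l) = d + l * d" "dim_col (fst_incl d l) = d"
  "dim_row (snd_incl d l) = d + l * d" "dim_col (snd_incl d l) = l * d"
  "dim_row (proj_stack d l P) = l * d" "dim_col (proj_stack d l P) = d"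
  "dim_row (proj_diag d l P) = l * d" "dim_col (proj_diag d l P) = l * d"
  "dim_row (proj_block d l P i) = l * d" "dim_col (proj_block d l P i) = d"
  "dim_row (proj_sum d l P) = d" "dim_col (proj_sum d l P) = d"
  "dim_row (lift_mat d l P s t) = d + l * d" "dim_col (lift_mat d l P s t) = l * d"
  unfolding fst_incl_def snd_incl_def proj_stack_def proj_diag_def proj_block_def proj_sum_def
    lift_mat_def by auto

lemma if_one_zero_mult: "(if P then 1 else 0) * (x :: complex) = (if P then x else 0)" by simp
lemma mult_if_one_zero: "(x :: complex) * (if P then 1 else 0) = (if P then x else 0)" by simp

lemma fst_incl_adjoint_lift:
  "mat_adjoint (fst_incl d l) * lift_mat d l P s t
    = complex_of_real s \<cdot>\<^sub>m mat_adjoint (proj_stack d l P)"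
  (is "?L = ?R")
proof (rule eq_matI)
  fix i j assume "i < dim_row ?R" "j < dim_col ?R"
  then have i: "i < d" and j: "j < l * d" by auto
  have "?L $$ (i, j) = (\<Sum>r<d + l * d. (if r = i then 1 else 0) * lift_mat d l P s t $$ (r, j))"
    using i j by (subst index_mult_mat_sum[of _ d "d + l * d" _ "l * d"])
      (auto simp: fst_incl_def intro!: sum.cong)
  also have "\<dots> = lift_mat d l P s t $$ (i, j)" using i by (simp add: if_one_zero_mult)
  also have "\<dots> = ?R $$ (i, j)" using i j by (auto simp: lift_mat_def proj_stack_def)
  finally show "?L $$ (i, j) = ?R $$ (i, j)" .
qed auto

lemma snd_incl_adjoint_lift:
  "mat_adjoint (snd_incl d l) * lift_mat d l P s t = complex_of_real t \<cdot>\<^sub>m proj_diag d l P"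
  (is "?L = ?R")
proof (rule eq_matI)
  fix i j assume "i < dim_row ?R" "j < dim_col ?R"
  then have i: "i < l * d" and j: "j < l * d" by auto
  have "?L $$ (i, j) = (\<Sum>r<d + l * d. (if r = d + i then 1 else 0) * lift_mat d l P s t $$ (r, j))"
    using i j by (subst index_mult_mat_sum[of _ "l * d" "d + l * d" _ "l * d"])
      (auto simp: snd_incl_def intro!: sum.cong)
  also have "\<dots> = lift_mat d l P s t $$ (d + i, j)" using i by (simp add: if_one_zero_mult)
  also have "\<dots> = ?R $$ (i, j)" using i j by (auto simp: lift_mat_def proj_diag_def)
  finally show "?L $$ (i, j) = ?R $$ (i, j)" .
qed auto

lemma fst_snd_incl_complete:
  "fst_incl d l * mat_adjoint (fst_incl d l) + snd_incl d l * mat_adjoint (snd_incl d l)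
    = 1\<^sub>m (d + l * d)"
proof (rule eq_matI)
  fix i j assume "i < dim_row (1\<^sub>m (d + l * d) :: complex mat)"
    "j < dim_col (1\<^sub>m (d + l * d) :: complex mat)"
  then have i: "i < d + l * d" and j: "j < d + l * d" by auto
  have "(fst_incl d l * mat_adjoint (fst_incl d l)) $$ (i, j)
      = (\<Sum>a<d. (if i = a then 1 else 0) * (if j = a then 1 else 0))"
    using i j by (subst index_mult_mat_sum[of _ "d + l * d" d _ "d + l * d"])
      (auto simp: fst_incl_def intro!: sum.cong)
  also have "\<dots> = (if i = j \<and> i < d then 1 else 0)" by (simp add: if_one_zero_mult)
  finally have fst: "(fst_incl d l * mat_adjoint (fst_incl d l)) $$ (i, j)
      = (if i = j \<and> i < d then 1 else 0)" .
  have "(snd_incl d l * mat_adjoint (snd_incl d l)) $$ (i, j)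
      = (\<Sum>a<l * d. (if i = d + a then 1 else 0) * (if j = d + a then 1 else 0))"
    using i j by (subst index_mult_mat_sum[of _ "d + l * d" "l * d" _ "d + l * d"])
      (auto simp: snd_incl_def intro!: sum.cong)
  also have "\<dots> = (\<Sum>a<l * d. (if a = i - d then (if i = j \<and> d \<le> i then 1 else 0) else 0))"
    by (rule sum.cong) auto
  also have "\<dots> = (if i = j \<and> d \<le> i then 1 else 0)" using i by auto
  finally have snd: "(snd_incl d l * mat_adjoint (snd_incl d l)) $$ (i, j)
      = (if i = j \<and> d \<le> i then 1 else 0)" .
  show "(fst_incl d l * mat_adjoint (fst_incl d l) + snd_incl d l * mat_adjoint (snd_incl d l)) $$ (i, j)
      = 1\<^sub>m (d + l * d) $$ (i, j)"
    using i j fst snd by auto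
qed auto

lemma embed_op_eq_fst_incl:
  assumes "A \<in> carrier_mat d d"
  shows "embed_op d l A = fst_incl d l * A * mat_adjoint (fst_incl d l)" (is "_ = ?R")
proof (rule eq_matI)
  fix i j assume "i < dim_row ?R" "j < dim_col ?R"
  then have i: "i < d + l * d" and j: "j < d + l * d" by auto
  have "?R $$ (i, j)
      = (\<Sum>b<d. (\<Sum>a<d. (if i = a then 1 else 0) * A $$ (a, b)) * (if j = b then 1 else 0))"
    using i j assms
    by (subst index_mult_mat_sum[of _ "d + l * d" d _ "d + l * d"])
      (auto simp: fst_incl_def index_mult_mat_sum[of _ "d + l * d" d _ d] scalar_prod_def
        atLeast0LessThan intro!: sum.cong)
  also have "\<dots> = (if i < d \<and> j < d then A $$ (i, j) else 0)"
    by (simp add: if_one_zero_mult mult_if_one_zero)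
  finally show "embed_op d l A $$ (i, j) = ?R $$ (i, j)"
    using i j assms unfolding embed_op_def by auto
qed (use assms in \<open>auto simp: embed_op_def\<close>)

context
  fixes d l :: nat and P :: "nat \<Rightarrow> complex mat"
  assumes proj: "\<And>i. i < l \<Longrightarrow> is_projector d (P i)"
begin

lemma proj_diag_stack: "proj_diag d l P * proj_stack d l P = proj_stack d l P" (is "?D * ?V = _")
proof (rule eq_matI)
  fix r c assume "r < dim_row ?V" "c < dim_col ?V"
  then have r: "r < l * d" and c: "c < d" by auto
  define i where "i = r div d"
  have i: "i < l" unfolding i_def using r by (rule block_div_less)
  have rm: "r mod d < d" using r by (rule block_mod_less)
  have "(?D * ?V) $$ (r, c) = (\<Sum>b<d. ?D $$ (r, i * d + b) * ?V $$ (i * d + b, c))"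
    using r c i by (intro index_mult_mat_one_block) (auto simp: proj_diag_def i_def)
  also have "\<dots> = (\<Sum>b<d. P i $$ (r mod d, b) * P i $$ (b, c))"
    using r c i block_index_less by (intro sum.cong) (auto simp: proj_diag_def proj_stack_def i_def)
  also have "\<dots> = ?V $$ (r, c)"
    using projector_index_square[OF proj[OF i] rm c] r c by (simp add: proj_stack_def i_def)
  finally show "(?D * ?V) $$ (r, c) = ?V $$ (r, c)" .
qed auto

lemma proj_diag_adjoint: "mat_adjoint (proj_diag d l P) = proj_diag d l P"
proof (rule eq_matI)
  fix r c assume "r < dim_row (proj_diag d l P)" "c < dim_col (proj_diag d l P)"
  then have r: "r < l * d" and c: "c < l * d" by auto
  show "mat_adjoint (proj_diag d l P) $$ (r, c) = proj_diag d l P $$ (r, c)"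
    using r c
      projector_index_cnj[OF proj[OF block_div_less[OF r]] block_mod_less[OF c] block_mod_less[OF r]]
    by (auto simp: proj_diag_def)
qed auto

lemma proj_diag_idem: "proj_diag d l P * proj_diag d l P = proj_diag d l P" (is "?D * ?D = _")
proof (rule eq_matI)
  fix r c assume "r < dim_row ?D" "c < dim_col ?D"
  then have r: "r < l * d" and c: "c < l * d" by auto
  define i where "i = r div d"
  have i: "i < l" unfolding i_def using r by (rule block_div_less)
  have rm: "r mod d < d" using r by (rule block_mod_less)
  have cm: "c mod d < d" using c by (rule block_mod_less)
  have "(?D * ?D) $$ (r, c) = (\<Sum>b<d. ?D $$ (r, i * d + b) * ?D $$ (i * d + b, c))"
    using r c i by (intro index_mult_mat_one_block) (auto simp: proj_diag_def i_def)
  also have "\<dots> = (\<Sum>b<d. if i = c div d then P i $$ (r mod d, b) * P i $$ (b, c mod d) else 0)"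
    using r c i block_index_less by (intro sum.cong) (auto simp: proj_diag_def i_def)
  also have "\<dots> = ?D $$ (r, c)"
    using projector_index_square[OF proj[OF i] rm cm] r c by (auto simp: proj_diag_def i_def)
  finally show "(?D * ?D) $$ (r, c) = ?D $$ (r, c)" .
qed auto

lemma proj_stack_gram: "mat_adjoint (proj_stack d l P) * proj_stack d l P = proj_sum d l P"
  (is "mat_adjoint ?V * ?V = _")
proof (rule eq_matI)
  fix b c assume "b < dim_row (proj_sum d l P)" "c < dim_col (proj_sum d l P)"
  then have b: "b < d" and c: "c < d" by auto
  have "(mat_adjoint ?V * ?V) $$ (b, c) = (\<Sum>r<l * d. cnj (?V $$ (r, b)) * ?V $$ (r, c))"
    using b c by (subst index_mult_mat_sum[of _ d "l * d" _ d]) (auto intro!: sum.cong)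
  also have "\<dots> = (\<Sum>i<l. \<Sum>a<d. cnj (?V $$ (i * d + a, b)) * ?V $$ (i * d + a, c))"
    by (rule sum_lessThan_blocks)
  also have "\<dots> = (\<Sum>i<l. \<Sum>a<d. P i $$ (b, a) * P i $$ (a, c))"
    using b c block_index_less projector_index_cnj[OF proj]
    by (intro sum.cong) (auto simp: proj_stack_def)
  also have "\<dots> = proj_sum d l P $$ (b, c)"
    using b c projector_index_square[OF proj b c] by (auto simp: proj_sum_def intro!: sum.cong)
  finally show "(mat_adjoint ?V * ?V) $$ (b, c) = proj_sum d l P $$ (b, c)" .
qed auto

lemma proj_block_adjoint_stack:
  assumes i: "i < l"
  shows "mat_adjoint (proj_block d l P i) * proj_stack d l P = P i" (is "mat_adjoint ?G * ?V = _")
proof (rule eq_matI)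
  have Pi: "P i \<in> carrier_mat d d" using proj[OF i] unfolding is_projector_def by auto
  fix b c assume "b < dim_row (P i)" "c < dim_col (P i)"
  then have b: "b < d" and c: "c < d" using Pi by auto
  have "(mat_adjoint ?G * ?V) $$ (b, c)
      = (\<Sum>a<d. mat_adjoint ?G $$ (b, i * d + a) * ?V $$ (i * d + a, c))"
    using b c i by (intro index_mult_mat_one_block) (auto simp: proj_block_def)
  also have "\<dots> = (\<Sum>a<d. P i $$ (b, a) * P i $$ (a, c))"
    using b c i block_index_less projector_index_cnj[OF proj[OF i]]
    by (intro sum.cong) (auto simp: proj_block_def proj_stack_def)
  also have "\<dots> = P i $$ (b, c)" using projector_index_square[OF proj[OF i] b c] .
  finally show "(mat_adjoint ?G * ?V) $$ (b, c) = P i $$ (b, c)" .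
qed (use proj[OF i] in \<open>auto simp: is_projector_def\<close>)

lemma proj_stack_adjoint_block:
  assumes i: "i < l"
  shows "mat_adjoint (proj_stack d l P) * proj_block d l P i = P i"
proof -
  have "mat_adjoint (mat_adjoint (proj_block d l P i) * proj_stack d l P) = P i"
    using proj_block_adjoint_stack[OF i] proj[OF i] unfolding is_projector_def by simp
  then show ?thesis by (simp add: mat_adjoint_mult[of _ d "l * d" _ d])
qed

lemma proj_block_gram:
  assumes i: "i < l"
  shows "mat_adjoint (proj_block d l P i) * proj_block d l P i = P i" (is "mat_adjoint ?G * ?G = _")
proof (rule eq_matI)
  have Pi: "P i \<in> carrier_mat d d" using proj[OF i] unfolding is_projector_def by auto
  fix b c assume "b < dim_row (P i)" "c < dim_col (P i)"
  then have b: "b < d" and c: "c < d" using Pi by auto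
  have "(mat_adjoint ?G * ?G) $$ (b, c)
      = (\<Sum>a<d. mat_adjoint ?G $$ (b, i * d + a) * ?G $$ (i * d + a, c))"
    using b c i by (intro index_mult_mat_one_block) (auto simp: proj_block_def)
  also have "\<dots> = (\<Sum>a<d. P i $$ (b, a) * P i $$ (a, c))"
    using b c i block_index_less projector_index_cnj[OF proj[OF i]]
    by (intro sum.cong) (auto simp: proj_block_def)
  also have "\<dots> = P i $$ (b, c)" using projector_index_square[OF proj[OF i] b c] .
  finally show "(mat_adjoint ?G * ?G) $$ (b, c) = P i $$ (b, c)" .
qed (use proj[OF i] in \<open>auto simp: is_projector_def\<close>)

lemma proj_block_proj:
  assumes i: "i < l"
  shows "proj_block d l P i * P i = proj_block d l P i" (is "?G * _ = _")
proof (rule eq_matI)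
  have Pi: "P i \<in> carrier_mat d d" using proj[OF i] unfolding is_projector_def by auto
  fix r c assume "r < dim_row ?G" "c < dim_col ?G"
  then have r: "r < l * d" and c: "c < d" by auto
  have rm: "r mod d < d" using r by (rule block_mod_less)
  have "(?G * P i) $$ (r, c) = (\<Sum>b<d. if r div d = i then P i $$ (r mod d, b) * P i $$ (b, c) else 0)"
    using r c Pi
    by (subst index_mult_mat_sum[of _ "l * d" d _ d]) (auto simp: proj_block_def intro!: sum.cong)
  also have "\<dots> = ?G $$ (r, c)"
    using projector_index_square[OF proj[OF i] rm c] r c by (auto simp: proj_block_def)
  finally show "(?G * P i) $$ (r, c) = ?G $$ (r, c)" .
qed (use proj[OF i] in \<open>auto simp: is_projector_def\<close>)

lemma proj_diag_block:
  assumes i: "i < l"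
  shows "proj_diag d l P * proj_block d l P i = proj_block d l P i" (is "?D * ?G = _")
proof (rule eq_matI)
  fix r c assume "r < dim_row ?G" "c < dim_col ?G"
  then have r: "r < l * d" and c: "c < d" by auto
  have rm: "r mod d < d" using r by (rule block_mod_less)
  have "(?D * ?G) $$ (r, c) = (\<Sum>b<d. ?D $$ (r, i * d + b) * ?G $$ (i * d + b, c))"
    using r c i by (intro index_mult_mat_one_block) (auto simp: proj_block_def)
  also have "\<dots> = (\<Sum>b<d. if r div d = i then P i $$ (r mod d, b) * P i $$ (b, c) else 0)"
    using r c i block_index_less by (intro sum.cong) (auto simp: proj_diag_def proj_block_def)
  also have "\<dots> = ?G $$ (r, c)"
    using projector_index_square[OF proj[OF i] rm c] r c by (auto simp: proj_block_def)
  finally show "(?D * ?G) $$ (r, c) = ?G $$ (r, c)" .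
qed auto

lemma mtrace_proj_sum:
  assumes \<sigma>: "\<sigma> \<in> carrier_mat d d"
  shows "mtrace (proj_sum d l P * \<sigma>) = (\<Sum>i<l. mtrace (P i * \<sigma>))"
proof -
  have "mtrace (proj_sum d l P * \<sigma>) = (\<Sum>b<d. \<Sum>c<d. (\<Sum>i<l. P i $$ (b, c)) * \<sigma> $$ (c, b))"
    using \<sigma> unfolding mtrace_def
    by (auto simp: proj_sum_def scalar_prod_def atLeast0LessThan intro!: sum.cong)
  also have "\<dots> = (\<Sum>i<l. \<Sum>b<d. \<Sum>c<d. P i $$ (b, c) * \<sigma> $$ (c, b))"
    by (simp add: sum_distrib_right sum.swap[of _ "{..<l}"])
  also have "\<dots> = (\<Sum>i<l. mtrace (P i * \<sigma>))"
  proof (rule sum.cong[OF refl])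
    fix i assume "i \<in> {..<l}"
    then have "P i \<in> carrier_mat d d" using proj unfolding is_projector_def by auto
    then show "(\<Sum>b<d. \<Sum>c<d. P i $$ (b, c) * \<sigma> $$ (c, b)) = mtrace (P i * \<sigma>)"
      using \<sigma> unfolding mtrace_def by (auto simp: scalar_prod_def atLeast0LessThan intro!: sum.cong)
  qed
  finally show ?thesis .
qed

section \<open>The projector onto the lifted vectors\<close>

lemma lift_mat_gram:
  "mat_adjoint (lift_mat d l P s t) * lift_mat d l P s t
    = complex_of_real (s\<^sup>2) \<cdot>\<^sub>m (proj_stack d l P * mat_adjoint (proj_stack d l P))
      + complex_of_real (t\<^sup>2) \<cdot>\<^sub>m proj_diag d l P"
proof -
  let ?V = "proj_stack d l P" and ?D = "proj_diag d l P"
  have V: "?V \<in> carrier_mat (l * d) d" and D: "?D \<in> carrier_mat (l * d) (l * d)" by auto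
  show ?thesis
    unfolding gram_split[OF block_mats_carrier(1,2,7) fst_snd_incl_complete]
      fst_incl_adjoint_lift snd_incl_adjoint_lift
    by (simp add: smult_mult_smult_mat[OF V mat_adjoint_carrier[OF V]] smult_mult_smult_mat[OF D D]
        proj_diag_adjoint proj_diag_idem power2_eq_square)
qed

lemma lift_mat_proj_diag: "lift_mat d l P s t * proj_diag d l P = lift_mat d l P s t"
proof (rule eq_by_complete_pair[OF block_mats_carrier(1,2) _ _ fst_snd_incl_complete])
  let ?E = "fst_incl d l" and ?F = "snd_incl d l" and ?R = "lift_mat d l P s t"
    and ?V = "proj_stack d l P" and ?D = "proj_diag d l P"
  have aE: "mat_adjoint ?E \<in> carrier_mat d (d + l * d)"
    and aF: "mat_adjoint ?F \<in> carrier_mat (l * d) (d + l * d)"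
    and R: "?R \<in> carrier_mat (d + l * d) (l * d)" and D: "?D \<in> carrier_mat (l * d) (l * d)"
    and V: "?V \<in> carrier_mat (l * d) d" by auto
  show "?R * ?D \<in> carrier_mat (d + l * d) (l * d)" "?R \<in> carrier_mat (d + l * d) (l * d)"
    using R D by auto
  have "mat_adjoint ?V * ?D = mat_adjoint ?V"
    using mat_adjoint_mult[OF D V] proj_diag_stack proj_diag_adjoint by simp
  then show "mat_adjoint ?E * (?R * ?D) = mat_adjoint ?E * ?R"
    using assoc_mult_mat[OF aE R D, symmetric]
    by (simp add: fst_incl_adjoint_lift mult_smult_assoc_mat[OF mat_adjoint_carrier[OF V] D])
  show "mat_adjoint ?F * (?R * ?D) = mat_adjoint ?F * ?R"
    using assoc_mult_mat[OF aF R D, symmetric]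
    by (simp add: snd_incl_adjoint_lift mult_smult_assoc_mat[OF D D] proj_diag_idem)
qed

lemma lift_mat_block_isometry:
  fixes s t :: real
  assumes i: "i < l" and st: "s\<^sup>2 + t\<^sup>2 = 1"
  shows "mat_adjoint (lift_mat d l P s t * proj_block d l P i)
    * (lift_mat d l P s t * proj_block d l P i) = P i"
proof -
  let ?R = "lift_mat d l P s t" and ?V = "proj_stack d l P" and ?D = "proj_diag d l P"
    and ?G = "proj_block d l P i"
  have Pi: "P i \<in> carrier_mat d d" and PP: "P i * P i = P i"
    using proj[OF i] unfolding is_projector_def by auto
  have R: "?R \<in> carrier_mat (d + l * d) (l * d)" and V: "?V \<in> carrier_mat (l * d) d"
    and D: "?D \<in> carrier_mat (l * d) (l * d)" and G: "?G \<in> carrier_mat (l * d) d"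
    and aR: "mat_adjoint ?R \<in> carrier_mat (l * d) (d + l * d)"
    and aV: "mat_adjoint ?V \<in> carrier_mat d (l * d)" and aG: "mat_adjoint ?G \<in> carrier_mat d (l * d)"
    by auto
  have "mat_adjoint (?R * ?G) * (?R * ?G) = mat_adjoint ?G * ((mat_adjoint ?R * ?R) * ?G)"
    unfolding mat_adjoint_mult[OF R G]
    using assoc_mult_mat[OF aG aR mult_carrier_mat[OF R G]] assoc_mult_mat[OF aR R G] by simp
  also have "(mat_adjoint ?R * ?R) * ?G
      = complex_of_real (s\<^sup>2) \<cdot>\<^sub>m (?V * P i) + complex_of_real (t\<^sup>2) \<cdot>\<^sub>m ?G"
    unfolding lift_mat_gram
    using add_mult_distrib_mat[OF smult_carrier_mat[OF mult_carrier_mat[OF V aV]]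
        smult_carrier_mat[OF D] G]
      mult_smult_assoc_mat[OF mult_carrier_mat[OF V aV] G] mult_smult_assoc_mat[OF D G]
      assoc_mult_mat[OF V aV G] proj_stack_adjoint_block[OF i] proj_diag_block[OF i] by simp
  also have "mat_adjoint ?G * (complex_of_real (s\<^sup>2) \<cdot>\<^sub>m (?V * P i) + complex_of_real (t\<^sup>2) \<cdot>\<^sub>m ?G)
      = (complex_of_real (s\<^sup>2) + complex_of_real (t\<^sup>2)) \<cdot>\<^sub>m P i"
    using mult_add_distrib_mat[OF aG smult_carrier_mat[OF mult_carrier_mat[OF V Pi]]
        smult_carrier_mat[OF G]]
      mult_smult_distrib[OF aG mult_carrier_mat[OF V Pi]] mult_smult_distrib[OF aG G]
      assoc_mult_mat[OF aG V Pi] proj_block_adjoint_stack[OF i] proj_block_gram[OF i] PP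
      add_smult_distrib_right_mat[OF Pi] by simp
  also have "complex_of_real (s\<^sup>2) + complex_of_real (t\<^sup>2) = 1"
    using st by (metis of_real_1 of_real_add)
  finally show ?thesis using Pi by (intro eq_matI) auto
qed

lemma lift_range_projector_lower_bound:
  fixes s t :: real
  assumes i: "i < l" and st: "s\<^sup>2 + t\<^sup>2 = 1"
    and Ph: "is_projector (d + l * d) Ph" and PhR: "Ph * lift_mat d l P s t = lift_mat d l P s t"
    and \<rho>: "psd_mat d \<rho>"
  shows "complex_of_real (s\<^sup>2) * mtrace (P i * \<rho>) \<le> mtrace (Ph * embed_op d l \<rho>)"
proof -
  let ?E = "fst_incl d l" and ?R = "lift_mat d l P s t" and ?V = "proj_stack d l P"
    and ?G = "proj_block d l P i"
  have Phc: "Ph \<in> carrier_mat (d + l * d) (d + l * d)" using Ph unfolding is_projector_def by auto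
  have Pi: "P i \<in> carrier_mat d d" using proj[OF i] unfolding is_projector_def by auto
  have \<rho>c: "\<rho> \<in> carrier_mat d d" using \<rho> unfolding psd_mat_def by auto
  have E: "?E \<in> carrier_mat (d + l * d) d" and R: "?R \<in> carrier_mat (d + l * d) (l * d)"
    and G: "?G \<in> carrier_mat (l * d) d" and aE: "mat_adjoint ?E \<in> carrier_mat d (d + l * d)"
    and aV: "mat_adjoint ?V \<in> carrier_mat d (l * d)" by auto
  define X where "X = ?R * ?G"
  have X: "X \<in> carrier_mat (d + l * d) d" unfolding X_def using mult_carrier_mat[OF R G] .
  have PhX: "Ph * X = X" unfolding X_def using assoc_mult_mat[OF Phc R G, symmetric] PhR by simp
  have XP: "X * P i = X" unfolding X_def using assoc_mult_mat[OF R G Pi] proj_block_proj[OF i] by simp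
  have EX: "mat_adjoint ?E * X = complex_of_real s \<cdot>\<^sub>m P i"
    unfolding X_def using assoc_mult_mat[OF aE R G, symmetric] fst_incl_adjoint_lift
      mult_smult_assoc_mat[OF aV G] proj_stack_adjoint_block[OF i] by simp
  have XX: "mat_adjoint X * X = P i" unfolding X_def by (rule lift_mat_block_isometry[OF i st])
  show ?thesis
    unfolding embed_op_eq_fst_incl[OF \<rho>c]
    by (rule mtrace_lower_bound_partial_isometry[OF Ph X PhX proj[OF i] XX XP E EX \<rho>])
qed

lemma lift_range_projector_upper_bound:
  fixes s t :: real
  assumes Ph: "is_projector (d + l * d) Ph" and M: "M \<in> carrier_mat (l * d) (d + l * d)"
    and PhRM: "Ph = lift_mat d l P s t * M" and \<sigma>: "psd_mat d \<sigma>"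
  shows "complex_of_real (t\<^sup>2) * mtrace (Ph * embed_op d l \<sigma>)
    \<le> complex_of_real (s\<^sup>2) * (\<Sum>i<l. mtrace (P i * \<sigma>))"
proof -
  let ?E = "fst_incl d l" and ?R = "lift_mat d l P s t" and ?V = "proj_stack d l P"
    and ?D = "proj_diag d l P"
  have Phc: "Ph \<in> carrier_mat (d + l * d) (d + l * d)" using Ph unfolding is_projector_def by auto
  have \<sigma>c: "\<sigma> \<in> carrier_mat d d" using \<sigma> unfolding psd_mat_def by auto
  have E: "?E \<in> carrier_mat (d + l * d) d" and R: "?R \<in> carrier_mat (d + l * d) (l * d)"
    and V: "?V \<in> carrier_mat (l * d) d" and D: "?D \<in> carrier_mat (l * d) (l * d)"
    and aV: "mat_adjoint ?V \<in> carrier_mat d (l * d)"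
    and aR: "mat_adjoint ?R \<in> carrier_mat (l * d) (d + l * d)" by auto
  have ME: "M * ?E \<in> carrier_mat (l * d) d" using mult_carrier_mat[OF M E] .
  define W where "W = ?D * (M * ?E)"
  have W: "W \<in> carrier_mat (l * d) d" unfolding W_def using mult_carrier_mat[OF D ME] .
  have "Ph * ?E = ?R * ?D * (M * ?E)"
    unfolding PhRM lift_mat_proj_diag using assoc_mult_mat[OF R M E] by simp
  also have "\<dots> = ?R * W" unfolding W_def using assoc_mult_mat[OF R D ME] by simp
  finally have PhE: "Ph * ?E = ?R * W" .
  have DW: "?D * W = W"
    unfolding W_def using assoc_mult_mat[OF D D ME, symmetric] proj_diag_idem by simp
  have "mat_adjoint ?R * (?R * W) = (mat_adjoint ?R * ?R) * W" using assoc_mult_mat[OF aR R W] by simp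
  also have "\<dots> = complex_of_real (s\<^sup>2) \<cdot>\<^sub>m (?V * (mat_adjoint ?V * W)) + complex_of_real (t\<^sup>2) \<cdot>\<^sub>m W"
    unfolding lift_mat_gram
    using add_mult_distrib_mat[OF smult_carrier_mat[OF mult_carrier_mat[OF V aV]]
        smult_carrier_mat[OF D] W]
      mult_smult_assoc_mat[OF mult_carrier_mat[OF V aV] W] mult_smult_assoc_mat[OF D W]
      assoc_mult_mat[OF V aV W] DW by simp
  finally have RRW: "mat_adjoint ?R * (?R * W)
      = complex_of_real (s\<^sup>2) \<cdot>\<^sub>m (?V * (mat_adjoint ?V * W)) + complex_of_real (t\<^sup>2) \<cdot>\<^sub>m W" .
  have "complex_of_real (t\<^sup>2) * mtrace (mat_adjoint ?E * Ph * ?E * \<sigma>)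
      \<le> complex_of_real (s\<^sup>2) * mtrace (mat_adjoint ?V * ?V * \<sigma>)"
    by (rule mtrace_compression_le[OF E R V W Ph PhE fst_incl_adjoint_lift RRW \<sigma>])
  then show ?thesis
    unfolding embed_op_eq_fst_incl[OF \<sigma>c] mtrace_mult_congruence[OF Phc E \<sigma>c] proj_stack_gram
      mtrace_proj_sum[OF \<sigma>c] .
qed
end

theorem corollary2:
  fixes d l :: nat and \<alpha> \<epsilon> :: real
    and \<rho> Proj :: "nat \<Rightarrow> complex mat"
  assumes "0 < \<alpha>" and "\<alpha> < 1" and "0 \<le> \<epsilon>"
    and "\<And>i. i < l \<Longrightarrow> is_state d (\<rho> i)"
    and "\<And>i. i < l \<Longrightarrow> is_projector d (Proj i)"
    and "\<And>i. i < l \<Longrightarrow> complex_of_real (1 - \<epsilon>) \<le> mtrace (Proj i * \<rho> i)"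
  shows "\<exists>Ph. is_projector (d + l * d) Ph
           \<and> (\<forall>i < l. complex_of_real (1 - \<epsilon> - \<alpha>) \<le> mtrace (Ph * embed_op d l (\<rho> i)))
           \<and> (\<forall>\<sigma>. is_state d \<sigma> \<longrightarrow>
                mtrace (Ph * embed_op d l \<sigma>)
                  \<le> complex_of_real ((1 - \<alpha>) / \<alpha>) * (\<Sum>i<l. mtrace (Proj i * \<sigma>)))"
proof -
  define s where "s = sqrt (1 - \<alpha>)"
  define t where "t = sqrt \<alpha>"
  have s2: "s\<^sup>2 = 1 - \<alpha>" and t2: "t\<^sup>2 = \<alpha>" unfolding s_def t_def using assms(1,2) by simp_all
  obtain Ph M where Ph: "is_projector (d + l * d) Ph" and M: "M \<in> carrier_mat (l * d) (d + l * d)"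
    and PhRM: "Ph = lift_mat d l Proj s t * M"
    and PhR: "Ph * lift_mat d l Proj s t = lift_mat d l Proj s t"
    using range_projector[OF block_mats_carrier(7)] by blast
  have "complex_of_real (1 - \<epsilon> - \<alpha>) \<le> mtrace (Ph * embed_op d l (\<rho> i))" if i: "i < l" for i
  proof -
    have "complex_of_real (1 - \<epsilon> - \<alpha>) \<le> complex_of_real (1 - \<alpha>) * complex_of_real (1 - \<epsilon>)"
      using assms(1,3) by (simp add: less_eq_complex_def algebra_simps)
    also have "\<dots> \<le> complex_of_real (1 - \<alpha>) * mtrace (Proj i * \<rho> i)"
      using assms(2) assms(6)[OF i] by (intro mult_left_mono) (auto simp: less_eq_complex_def)
    also have "\<dots> \<le> mtrace (Ph * embed_op d l (\<rho> i))"
      using lift_range_projector_lower_bound[OF assms(5) i _ Ph PhR] assms(4)[OF i] s2 t2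
      unfolding is_state_def by simp
    finally show ?thesis .
  qed
  moreover have "mtrace (Ph * embed_op d l \<sigma>)
      \<le> complex_of_real ((1 - \<alpha>) / \<alpha>) * (\<Sum>i<l. mtrace (Proj i * \<sigma>))" if "is_state d \<sigma>" for \<sigma>
  proof -
    have "complex_of_real \<alpha> * mtrace (Ph * embed_op d l \<sigma>)
        \<le> complex_of_real (1 - \<alpha>) * (\<Sum>i<l. mtrace (Proj i * \<sigma>))"
      using lift_range_projector_upper_bound[OF assms(5) Ph M PhRM] that s2 t2
      unfolding is_state_def by simp
    then show ?thesis using assms(1) by (auto simp: less_eq_complex_def field_simps)
  qed
  ultimately show ?thesis using Ph by blast
qed

end
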